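(* Consider the decentralized setting of the context. Assume that whenever $(j,s)\in\mathcal S^i_t$ one has $|\mathcal S^j_s|<|\mathcal S^i_t|$, that the maximum delay is bounded by $\tau$, and that all loss functions $f^i_t$ are $G$-Lipschitz with respect to $\|\cdot\|$. Then for any $p\in\mathcal X$ with $h(p)\le r^2$, D-DDA with stepsizes \[\eta^i_t=\frac{r}{G\sqrt{(5\tau+3)\big(|\mathcal S^i_t|+(\tau+1)M_{\max}\big)M_{\max}}}\] guarantees a collective regret $R^{g}_T(p)=O\big(\sqrt{\tau N M_{\max}}\big)$, for any choice of reference indices $j_t$.
   Context: Let $\mathcal V$ be a finite-dimensional real vector space with norm $\|\cdot\|$ and dual norm $\|\cdot\|_*$, and $\mathcal X\subset\mathcal V$ closed convex. A regularizer $h:\mathcal V\to\mathbb R\cup\{+\infty\}$ is lower semicontinuous, $1$-strongly convex w.r.t. $\|\cdot\|$ on $\mathcal X$, with $\mathcal X\subset\operatorname{dom}h$, whose subdifferential admits a continuous selection, and $h\ge0$. Decentralized protocol: at each time $t=1,\dots,T$, $M_t\ge1$ agents are active, labelled $1,\dots,M_t$; agent $i$ plays $x^i_t\in\mathcal X$ against a convex loss $f^i_t$ (with $\mathcal X\subset\operatorname{dom}\partial f^i_t$) and the subgradient $g^i_t\in\partial f^i_t(x^i_t)$ is later shared. $\mathcal S^i_t\subset\{(j,s):1\le s\le t-1,\ 1\le j\le M_s\}$ is the set of (agent, time) indices of the feedback used for playing $x^i_t$. D-DDA: $x^i_t=\arg\min_{x\in\mathcal X}\{\sum_{(j,s)\in\mathcal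 S^i_t}\langle g^j_s,x\rangle+h(x)/\eta^i_t\}$. Maximum delay bounded by $\tau$: for all $t$, $i$, every $s\le t-\tau-1$ and $j\le M_s$, $(j,s)\in\mathcal S^i_t$. $M_{\max}=\max_tM_t$, $N=\sum_{t=1}^TM_t$. Collective regret with reference agents $j_t\in\{1,\dots,M_t\}$: $R^{g}_T(p)=\sum_{t=1}^T\sum_{i=1}^{M_t}f^i_t(x^{j_t}_t)-\sum_{t=1}^T\sum_{i=1}^{M_t}f^i_t(p)$. *)

theory Defs
  imports "HOL-Analysis.Analysis"
begin

text \<open>The finite-dimensional real vector space V is modelled by a type of class
  euclidean_space; the inner product is used only as the duality pairing between
  V and its dual (identified with V).  The norm of the problem is an arbitrary
  norm nrm on V, not necessarily the Euclidean one.\<close>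

definition is_norm :: "('v::real_vector \<Rightarrow> real) \<Rightarrow> bool" where
  "is_norm nrm \<longleftrightarrow>
     (\<forall>x. 0 \<le> nrm x) \<and> (\<forall>x. nrm x = 0 \<longleftrightarrow> x = 0) \<and>
     (\<forall>c x. nrm (c *\<^sub>R x) = \<bar>c\<bar> * nrm x) \<and>
     (\<forall>x y. nrm (x + y) \<le> nrm x + nrm y)"

definition lsc :: "('v::topological_space \<Rightarrow> ereal) \<Rightarrow> bool" where
  "lsc h \<longleftrightarrow> (\<forall>x. h x \<le> Liminf (at x) h)"

definition subdiff_e :: "('v::real_inner \<Rightarrow> ereal) \<Rightarrow> 'v \<Rightarrow> 'v set" where
  "subdiff_e h x = {g. \<bar>h x\<bar> \<noteq> \<infinity> \<and> (\<forall>y. h x + ereal (g \<bullet> (y - x)) \<le> h y)}"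

definition subdiff :: "('v::real_inner \<Rightarrow> real) \<Rightarrow> 'v \<Rightarrow> 'v set" where
  "subdiff f x = {g. \<forall>y. f x + g \<bullet> (y - x) \<le> f y}"

definition strongly_convex_on :: "'v::real_vector set \<Rightarrow> ('v \<Rightarrow> real) \<Rightarrow> ('v \<Rightarrow> ereal) \<Rightarrow> bool" where
  "strongly_convex_on X nrm h \<longleftrightarrow>
     (\<forall>x\<in>X. \<forall>y\<in>X. \<forall>a::real. 0 \<le> a \<and> a \<le> 1 \<longrightarrow>
        h (a *\<^sub>R x + (1 - a) *\<^sub>R y)
          \<le> ereal a * h x + ereal (1 - a) * h y
             - ereal (a * (1 - a) / 2 * (nrm (x - y))\<^sup>2))"

definition regularizer :: "'v::euclidean_space set \<Rightarrow> ('v \<Rightarrow> real) \<Rightarrow> ('v \<Rightarrow> ereal) \<Rightarrow> bool" where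
  "regularizer X nrm h \<longleftrightarrow>
     lsc h \<and> strongly_convex_on X nrm h \<and> (\<forall>x\<in>X. h x < \<infinity>) \<and> (\<forall>x. 0 \<le> h x) \<and>
     (\<exists>\<sigma>. continuous_on {x. subdiff_e h x \<noteq> {}} \<sigma> \<and>
          (\<forall>x. subdiff_e h x \<noteq> {} \<longrightarrow> \<sigma> x \<in> subdiff_e h x))"

definition lipschitz_wrt :: "('v::real_vector \<Rightarrow> real) \<Rightarrow> real \<Rightarrow> ('v \<Rightarrow> real) \<Rightarrow> bool" where
  "lipschitz_wrt nrm G f \<longleftrightarrow> (\<forall>x y. \<bar>f x - f y\<bar> \<le> G * nrm (x - y))"

definition Mmax :: "nat \<Rightarrow> (nat \<Rightarrow> nat) \<Rightarrow> nat" where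
  "Mmax T M = Max (M ` {1..T})"

definition Ntot :: "nat \<Rightarrow> (nat \<Rightarrow> nat) \<Rightarrow> nat" where
  "Ntot T M = (\<Sum>t=1..T. M t)"

definition stepsize :: "real \<Rightarrow> real \<Rightarrow> nat \<Rightarrow> nat \<Rightarrow> (nat \<Rightarrow> nat) \<Rightarrow> (nat \<times> nat) set \<Rightarrow> real" where
  "stepsize r G \<tau> T M S' =
     r / (G * sqrt ((5 * real \<tau> + 3) * (real (card S') + (real \<tau> + 1) * real (Mmax T M)) * real (Mmax T M)))"

text \<open>Collective regret with reference agents jt (agent index first, time second).\<close>
definition coll_regret :: "nat \<Rightarrow> (nat \<Rightarrow> nat) \<Rightarrow> (nat \<Rightarrow> nat \<Rightarrow> 'v \<Rightarrow> real) \<Rightarrow> (nat \<Rightarrow> nat \<Rightarrow> 'v)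
     \<Rightarrow> (nat \<Rightarrow> nat) \<Rightarrow> 'v \<Rightarrow> real" where
  "coll_regret T M f x jt p =
     (\<Sum>t=1..T. \<Sum>i=1..M t. f i t (x (jt t) t)) - (\<Sum>t=1..T. \<Sum>i=1..M t. f i t p)"

end

theory Submission
  imports Defs
begin

text \<open>
  Every agent is compared with a virtual, fully informed leader: an approximate minimizer y_t of
  \<open>L_t \<bullet> z + h z / \<beta>_t\<close>, where L_t sums all gradients of the rounds before t and \<beta>_t is
  the D-DDA stepsize of a feedback set of that size.  The follow-the-regularized-leader argument
  bounds the regret of the leaders by \<open>h p / \<beta>_(T+1) + \<Sum>_t \<beta>_t (M_t G)\<^sup>2\<close>.  Agent i at
  time t misses at most \<open>\<tau> M_max\<close> of these gradients and its stepsize exceeds \<beta>_t by a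
  matching amount, so strong convexity of h keeps its iterate within \<open>O(\<tau> M_max G \<beta>_t)\<close>
  of y_t, which by Lipschitz continuity costs \<open>O(\<tau> M_max G\<^sup>2 \<beta>_t M_t)\<close> in round t.
  As \<beta>_t is proportional to \<open>1 / sqrt (\<Sum>_(s<t) M_s + (\<tau> + 1) M_max)\<close>, summing gives
  \<open>O(r G sqrt (\<tau> N M_max))\<close> as soon as \<open>N \<ge> (\<tau> + 1) M_max\<close>; for smaller N every iterate
  stays within 6 r of p and the trivial bound 6 r G N suffices.

  Leaders are only approximate minimizers, so no existence argument is needed.
\<close>

section \<open>Elementary inequalities\<close>

lemma mult_le_weighted_squares:
  fixes a d \<beta> :: real
  assumes "0 < \<beta>"
  shows "a * d \<le> d\<^sup>2 / (4 * \<beta>) + \<beta> * a\<^sup>2"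
proof -
  have "0 \<le> (d - 2 * \<beta> * a)\<^sup>2 / (4 * \<beta>)"
    using assms by simp
  also have "\<dots> = d\<^sup>2 / (4 * \<beta>) + \<beta> * a\<^sup>2 - a * d"
    using assms by (simp add: field_simps power2_eq_square)
  finally show ?thesis by simp
qed

lemma le_sqrt_of_sq_le:
  fixes d D e :: real
  assumes "d\<^sup>2 \<le> 2 * D * d + 4 * e" "0 \<le> D" "0 \<le> e"
  shows "d \<le> 2 * D + 2 * sqrt e"
proof (rule ccontr)
  assume "\<not> ?thesis"
  then have less: "2 * D + 2 * sqrt e < d" by simp
  have "0 \<le> sqrt e" using assms(3) by simp
  then have "0 < d" using less assms(2) by linarith
  then have "d * (2 * D) + d * (2 * sqrt e) < d * d"
    using mult_strict_left_mono[OF less] by (simp add: distrib_left)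
  moreover have "2 * sqrt e * (2 * sqrt e) \<le> d * (2 * sqrt e)"
    using less assms(2) \<open>0 \<le> sqrt e\<close> by (intro mult_right_mono) auto
  moreover have "2 * sqrt e * (2 * sqrt e) = 4 * e"
    using assms(3) by (simp add: power2_eq_square[symmetric])
  ultimately show False
    using assms(1) by (simp add: power2_eq_square algebra_simps)
qed

lemma div_sqrt_le_sqrt_diff:
  fixes n m c :: real
  assumes "0 \<le> n" "0 \<le> m" "m \<le> c"
  shows "m / sqrt (n + c) \<le> 2 * (sqrt (n + m) - sqrt n)"
proof (cases "m = 0")
  case False
  then have "0 < m" using assms by simp
  have "m = (sqrt (n + m) - sqrt n) * (sqrt (n + m) + sqrt n)"
    using assms by (simp add: algebra_simps)
  also have "\<dots> \<le> (sqrt (n + m) - sqrt n) * (2 * sqrt (n + m))"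
    using assms by (intro mult_left_mono) auto
  finally have "m \<le> 2 * (sqrt (n + m) - sqrt n) * sqrt (n + m)"
    by (simp add: algebra_simps)
  then have "m / sqrt (n + m) \<le> 2 * (sqrt (n + m) - sqrt n)"
    using \<open>0 < m\<close> assms(1) by (simp add: pos_divide_le_eq)
  moreover have "m / sqrt (n + c) \<le> m / sqrt (n + m)"
    using assms \<open>0 < m\<close> by (intro divide_left_mono) auto
  ultimately show ?thesis by linarith
qed simp

lemma sum_div_sqrt_partial_sums_le:
  fixes m :: "nat \<Rightarrow> real"
  assumes "\<And>t. t \<in> {1..T} \<Longrightarrow> 0 \<le> m t \<and> m t \<le> c"
  shows "(\<Sum>t=1..T. m t / sqrt ((\<Sum>s\<in>{1..<t}. m s) + c)) \<le> 2 * sqrt (\<Sum>t=1..T. m t)"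
  using assms
proof (induction T)
  case (Suc T)
  have "0 \<le> (\<Sum>s=1..T. m s)"
    using Suc.prems by (intro sum_nonneg) auto
  then have "m (Suc T) / sqrt ((\<Sum>s=1..T. m s) + c)
      \<le> 2 * (sqrt ((\<Sum>s=1..T. m s) + m (Suc T)) - sqrt (\<Sum>s=1..T. m s))"
    using Suc.prems by (intro div_sqrt_le_sqrt_diff) auto
  moreover have "{1..<Suc T} = {1..T}" by auto
  ultimately show ?case
    using Suc by (simp add: algebra_simps)
qed simp

lemma mult_inverse_sqrt_diff_le:
  fixes \<sigma> n c :: real
  assumes "0 \<le> \<sigma>" "\<sigma> \<le> n" "0 < c"
  shows "\<sigma> * (1 / sqrt (\<sigma> + c) - 1 / sqrt (n + c)) \<le> (n - \<sigma>) / sqrt (n + c)"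
proof -
  define a where "a = sqrt (\<sigma> + c)"
  define b where "b = sqrt (n + c)"
  have a: "0 < a" "a * a = \<sigma> + c" using assms by (simp_all add: a_def)
  have b: "a \<le> b" "b * b = n + c" using assms by (simp_all add: a_def b_def)
  have "0 < b" using a(1) b(1) by linarith
  have "1 / a - 1 / b = (b - a) / (a * b)"
    using a b by (simp add: field_simps)
  moreover have "\<sigma> * ((b - a) / (a * b)) \<le> (a * a) * ((b - a) / (a * b))"
    using a b assms by (intro mult_right_mono) auto
  ultimately have "\<sigma> * (1 / a - 1 / b) \<le> (a * a) * ((b - a) / (a * b))" by simp
  also have "\<dots> = a * (b - a) / b"
    using a(1) \<open>0 < b\<close> by (simp add: field_simps)
  also have "\<dots> \<le> (b + a) * (b - a) / b"
    using a b by (intro divide_right_mono mult_right_mono) auto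
  also have "(b + a) * (b - a) = n - \<sigma>"
    using a b by (simp add: algebra_simps)
  finally show ?thesis by (simp add: a_def b_def)
qed

section \<open>Norms and regularized linear minimization\<close>

lemma is_norm_nonneg: "is_norm nrm \<Longrightarrow> 0 \<le> nrm v"
  by (simp add: is_norm_def)

lemma is_norm_minus_commute:
  assumes "is_norm nrm"
  shows "nrm (a - b) = nrm (b - a)"
proof -
  have "nrm ((-1) *\<^sub>R (b - a)) = \<bar>-1\<bar> * nrm (b - a)"
    using assms unfolding is_norm_def by blast
  then show ?thesis by simp
qed

lemma is_norm_triangle_diff:
  assumes "is_norm nrm"
  shows "nrm (a - b) \<le> nrm (a - y) + nrm (b - y)"
proof -
  have "nrm ((a - y) + (y - b)) \<le> nrm (a - y) + nrm (y - b)"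
    using assms unfolding is_norm_def by blast
  then show ?thesis using is_norm_minus_commute[OF assms, of y b] by simp
qed

lemma subgradient_inner_le:
  assumes "is_norm nrm" "lipschitz_wrt nrm G f" "g \<in> subdiff f x"
  shows "\<bar>g \<bullet> v\<bar> \<le> G * nrm v"
proof -
  have sub: "f x + g \<bullet> (y - x) \<le> f y" for y
    using assms(3) by (simp add: subdiff_def)
  have lip: "\<bar>f y - f x\<bar> \<le> G * nrm (y - x)" for y
    using assms(2) by (simp add: lipschitz_wrt_def)
  have "g \<bullet> v \<le> f (x + v) - f x"
    using sub[of "x + v"] by simp
  also have "\<dots> \<le> G * nrm v"
    using abs_le_D1[OF lip[of "x + v"]] by simp
  finally have "g \<bullet> v \<le> G * nrm v" .
  moreover have "- (g \<bullet> v) \<le> f (x - v) - f x"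
    using sub[of "x - v"] by (simp add: inner_minus_right)
  moreover have "f (x - v) - f x \<le> G * nrm v"
    using abs_le_D1[OF lip[of "x - v"]] is_norm_minus_commute[OF assms(1), of 0 v] by simp
  ultimately show ?thesis by linarith
qed

lemma inner_sum_abs_le:
  assumes "finite A" "\<And>w. w \<in> A \<Longrightarrow> \<bar>u w \<bullet> v\<bar> \<le> B * nv"
  shows "\<bar>(\<Sum>w\<in>A. u w) \<bullet> v\<bar> \<le> real (card A) * B * nv"
proof -
  have "\<bar>(\<Sum>w\<in>A. u w) \<bullet> v\<bar> \<le> (\<Sum>w\<in>A. \<bar>u w \<bullet> v\<bar>)"
    by (simp add: inner_sum_left sum_abs)
  also have "\<dots> \<le> (\<Sum>w\<in>A. B * nv)"
    by (rule sum_mono) (rule assms(2))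
  finally show ?thesis by simp
qed

definition midpoint_strongly_convex :: "'v::real_vector set \<Rightarrow> ('v \<Rightarrow> real) \<Rightarrow> ('v \<Rightarrow> real) \<Rightarrow> bool"
  where "midpoint_strongly_convex X nrm H \<longleftrightarrow>
    (\<forall>x\<in>X. \<forall>y\<in>X. H ((1/2) *\<^sub>R x + (1/2) *\<^sub>R y) \<le> H x / 2 + H y / 2 - (nrm (x - y))\<^sup>2 / 8)"

lemma regularizer_nonneg: "regularizer X nrm h \<Longrightarrow> 0 \<le> real_of_ereal (h z)"
  by (simp add: regularizer_def real_of_ereal_pos)

lemma regularizer_midpoint_strongly_convex:
  assumes "regularizer X nrm h"
  shows "midpoint_strongly_convex X nrm (\<lambda>z. real_of_ereal (h z))"
  unfolding midpoint_strongly_convex_def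
proof (intro ballI)
  fix x y assume xy: "x \<in> X" "y \<in> X"
  have finite: "h z = ereal (real_of_ereal (h z))" if "z \<in> X" for z
  proof -
    have "0 \<le> h z" "h z < \<infinity>"
      using assms that unfolding regularizer_def by auto
    then show ?thesis by (cases "h z") auto
  qed
  have "strongly_convex_on X nrm h"
    using assms by (simp add: regularizer_def)
  from this[unfolded strongly_convex_on_def, rule_format, of x y "1/2"] xy
  have "h ((1/2) *\<^sub>R x + (1 - 1/2) *\<^sub>R y)
      \<le> ereal (1/2) * h x + ereal (1 - 1/2) * h y - ereal (1/2 * (1 - 1/2) / 2 * (nrm (x - y))\<^sup>2)"
    by simp
  then have "h ((1/2) *\<^sub>R x + (1/2) *\<^sub>R y)
      \<le> ereal (real_of_ereal (h x) / 2 + real_of_ereal (h y) / 2 - (nrm (x - y))\<^sup>2 / 8)"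
    by (subst (asm) finite[OF xy(1)], subst (asm) finite[OF xy(2)]) simp
  moreover have "0 \<le> h ((1/2) *\<^sub>R x + (1/2) *\<^sub>R y)"
    using assms by (simp add: regularizer_def)
  ultimately show "real_of_ereal (h ((1/2) *\<^sub>R x + (1/2) *\<^sub>R y))
      \<le> real_of_ereal (h x) / 2 + real_of_ereal (h y) / 2 - (nrm (x - y))\<^sup>2 / 8"
    by (cases "h ((1/2) *\<^sub>R x + (1/2) *\<^sub>R y)") auto
qed

definition approx_minimizer :: "'a set \<Rightarrow> ('a \<Rightarrow> real) \<Rightarrow> real \<Rightarrow> 'a \<Rightarrow> bool"
  where "approx_minimizer X F \<epsilon> y \<longleftrightarrow> y \<in> X \<and> (\<forall>z\<in>X. F y \<le> F z + \<epsilon>)"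

lemma approx_minimizer_exists:
  fixes F :: "'a \<Rightarrow> real"
  assumes "X \<noteq> {}" "\<And>z. z \<in> X \<Longrightarrow> b \<le> F z" "0 < \<epsilon>"
  shows "\<exists>y. approx_minimizer X F \<epsilon> y"
proof -
  have bdd: "bdd_below (F ` X)"
    using assms(2) by (rule bdd_belowI2)
  obtain y where y: "y \<in> X" "F y < Inf (F ` X) + \<epsilon>"
    using cInf_lessD[of "F ` X" "Inf (F ` X) + \<epsilon>"] assms(1,3) by auto
  have "F y \<le> F z + \<epsilon>" if "z \<in> X" for z
    using y(2) cInf_lower[OF imageI[OF that] bdd] by linarith
  then show ?thesis
    using y(1) unfolding approx_minimizer_def by blast
qed

lemma approx_minimizer_scaleR:
  fixes \<theta> :: "'v::real_inner"
  assumes "0 < \<beta>" "approx_minimizer X (\<lambda>z. \<theta> \<bullet> z + H z / \<beta>) \<epsilon> y"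
  shows "approx_minimizer X (\<lambda>z. (\<beta> *\<^sub>R \<theta>) \<bullet> z + H z) (\<beta> * \<epsilon>) y"
  unfolding approx_minimizer_def
proof (intro conjI ballI)
  show "y \<in> X" using assms(2) by (simp add: approx_minimizer_def)
  fix z assume "z \<in> X"
  then have "\<beta> * (\<theta> \<bullet> y + H y / \<beta>) \<le> \<beta> * (\<theta> \<bullet> z + H z / \<beta> + \<epsilon>)"
    using assms by (intro mult_left_mono) (auto simp: approx_minimizer_def)
  then show "(\<beta> *\<^sub>R \<theta>) \<bullet> y + H y \<le> (\<beta> *\<^sub>R \<theta>) \<bullet> z + H z + \<beta> * \<epsilon>"
    using assms(1) by (simp add: distrib_left)
qed

lemma approx_minimizer_quadratic_growth:
  fixes \<theta> :: "'v::real_inner"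
  assumes "convex X" "midpoint_strongly_convex X nrm H" "0 < \<beta>"
    and "approx_minimizer X (\<lambda>z. \<theta> \<bullet> z + H z / \<beta>) \<epsilon> y" "x \<in> X"
  shows "\<theta> \<bullet> y + H y / \<beta> - 2 * \<epsilon> + (nrm (x - y))\<^sup>2 / (4 * \<beta>) \<le> \<theta> \<bullet> x + H x / \<beta>"
proof -
  define m where "m = (1/2) *\<^sub>R x + (1/2) *\<^sub>R y"
  define q where "q = (nrm (x - y))\<^sup>2 / (4 * \<beta>)"
  have y: "y \<in> X" and m: "m \<in> X"
    using assms(1,4,5) unfolding approx_minimizer_def convex_def m_def by auto
  have "\<theta> \<bullet> y + H y / \<beta> \<le> \<theta> \<bullet> m + H m / \<beta> + \<epsilon>"
    using assms(4) m by (simp add: approx_minimizer_def)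
  moreover have "\<theta> \<bullet> m = \<theta> \<bullet> x / 2 + \<theta> \<bullet> y / 2"
    by (simp add: m_def inner_add_right)
  moreover have "H m / \<beta> \<le> H x / \<beta> / 2 + H y / \<beta> / 2 - q / 2"
  proof -
    have "H m \<le> H x / 2 + H y / 2 - (nrm (x - y))\<^sup>2 / 8"
      using assms(2,5) y by (simp add: midpoint_strongly_convex_def m_def)
    then have "H m / \<beta> \<le> (H x / 2 + H y / 2 - (nrm (x - y))\<^sup>2 / 8) / \<beta>"
      using assms(3) by (simp add: divide_right_mono)
    also have "\<dots> = H x / \<beta> / 2 + H y / \<beta> / 2 - q / 2"
      using assms(3) by (simp add: q_def field_simps)
    finally show ?thesis .
  qed
  ultimately show ?thesis
    unfolding q_def[symmetric] by argo
qed

lemma regularized_linear_approx_minimizer_exists: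
  fixes \<theta> :: "'v::real_inner"
  assumes "midpoint_strongly_convex X nrm H" "\<And>z. 0 \<le> H z" "0 < \<beta>" "X \<noteq> {}"
    and "\<And>v. \<bar>\<theta> \<bullet> v\<bar> \<le> a * nrm v" "0 < \<epsilon>"
  shows "\<exists>y. approx_minimizer X (\<lambda>z. \<theta> \<bullet> z + H z / \<beta>) \<epsilon> y"
proof -
  obtain x0 where x0: "x0 \<in> X" using assms(4) by blast
  have "\<theta> \<bullet> x0 - H x0 / \<beta> - \<beta> * a\<^sup>2 \<le> \<theta> \<bullet> z + H z / \<beta>" if z: "z \<in> X" for z
  proof -
    let ?d = "nrm (z - x0)"
    have "H ((1/2) *\<^sub>R z + (1/2) *\<^sub>R x0) \<le> H z / 2 + H x0 / 2 - ?d\<^sup>2 / 8"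
      using assms(1) x0 z by (simp add: midpoint_strongly_convex_def)
    then have "?d\<^sup>2 / 4 - H x0 \<le> H z"
      using assms(2)[of "(1/2) *\<^sub>R z + (1/2) *\<^sub>R x0"] by linarith
    then have "(?d\<^sup>2 / 4 - H x0) / \<beta> \<le> H z / \<beta>"
      using assms(3) by (simp add: divide_right_mono)
    moreover have "(?d\<^sup>2 / 4 - H x0) / \<beta> = ?d\<^sup>2 / (4 * \<beta>) - H x0 / \<beta>"
      using assms(3) by (simp add: field_simps)
    moreover have "\<theta> \<bullet> x0 - a * ?d \<le> \<theta> \<bullet> z"
      using abs_le_D2[OF assms(5)[of "z - x0"]] by (simp add: inner_diff_right)
    moreover have "a * ?d \<le> ?d\<^sup>2 / (4 * \<beta>) + \<beta> * a\<^sup>2"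
      by (rule mult_le_weighted_squares[OF assms(3)])
    ultimately show ?thesis by argo
  qed
  then show ?thesis
    by (rule approx_minimizer_exists[OF assms(4) _ assms(6)])
qed

lemma approx_minimizers_close:
  fixes a b :: "'v::real_inner"
  assumes "is_norm nrm" "convex X" "midpoint_strongly_convex X nrm H"
    and x: "approx_minimizer X (\<lambda>z. a \<bullet> z + H z) 0 x"
    and y: "approx_minimizer X (\<lambda>z. b \<bullet> z + H z) e y"
    and D: "\<And>v. \<bar>(a - b) \<bullet> v\<bar> \<le> D * nrm v" and "0 \<le> D" "0 \<le> e"
  shows "nrm (x - y) \<le> 2 * D + 2 * sqrt e"
proof (rule le_sqrt_of_sq_le)
  have xX: "x \<in> X" and yX: "y \<in> X"
    using x y by (simp_all add: approx_minimizer_def)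
  have "a \<bullet> x + H x / 1 - 2 * 0 + (nrm (y - x))\<^sup>2 / (4 * 1) \<le> a \<bullet> y + H y / 1"
    by (rule approx_minimizer_quadratic_growth[OF assms(2,3) _ _ yX]) (use x in simp_all)
  moreover have "b \<bullet> y + H y / 1 - 2 * e + (nrm (x - y))\<^sup>2 / (4 * 1) \<le> b \<bullet> x + H x / 1"
    by (rule approx_minimizer_quadratic_growth[OF assms(2,3) _ _ xX]) (use y in simp_all)
  moreover have "(a - b) \<bullet> (y - x) \<le> D * nrm (x - y)"
    using abs_le_D1[OF D[of "y - x"]] is_norm_minus_commute[OF assms(1), of y x] by simp
  ultimately show "(nrm (x - y))\<^sup>2 \<le> 2 * D * nrm (x - y) + 4 * e"
    using is_norm_minus_commute[OF assms(1), of y x] by (simp add: inner_diff_left inner_diff_right)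
qed (use assms in simp_all)

lemma approx_leader_step:
  fixes L l :: "'v::real_inner"
  assumes "convex X" "midpoint_strongly_convex X nrm H" "\<And>z. 0 \<le> H z"
    and "0 < \<beta>'" "\<beta>' \<le> \<beta>"
    and "\<And>v. \<bar>l \<bullet> v\<bar> \<le> a * nrm v"
    and "approx_minimizer X (\<lambda>z. L \<bullet> z + H z / \<beta>) \<epsilon> y" "z \<in> X"
  shows "L \<bullet> y + H y / \<beta> + l \<bullet> y - (2 * \<epsilon> + \<beta> * a\<^sup>2) \<le> (L + l) \<bullet> z + H z / \<beta>'"
proof -
  have \<beta>: "0 < \<beta>" using assms(4,5) by linarith
  let ?d = "nrm (z - y)"
  have "L \<bullet> y + H y / \<beta> - 2 * \<epsilon> + ?d\<^sup>2 / (4 * \<beta>) \<le> L \<bullet> z + H z / \<beta>"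
    by (rule approx_minimizer_quadratic_growth[OF assms(1,2) \<beta> assms(7,8)])
  moreover have "l \<bullet> y - a * ?d \<le> l \<bullet> z"
    using abs_le_D2[OF assms(6)[of "z - y"]] by (simp add: inner_diff_right)
  moreover have "a * ?d \<le> ?d\<^sup>2 / (4 * \<beta>) + \<beta> * a\<^sup>2"
    by (rule mult_le_weighted_squares[OF \<beta>])
  moreover have "H z / \<beta> \<le> H z / \<beta>'"
    using assms(3-5) by (intro divide_left_mono) auto
  ultimately show ?thesis
    unfolding inner_add_left by argo
qed

lemma approx_leader_regret_bound:
  fixes l :: "nat \<Rightarrow> 'v::real_inner"
  assumes "convex X" "midpoint_strongly_convex X nrm H" "\<And>z. 0 \<le> H z"
    and \<beta>: "\<And>t. 0 < \<beta> t" "\<And>t. \<beta> (Suc t) \<le> \<beta> t"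
    and l: "\<And>t v. t \<in> {1..T} \<Longrightarrow> \<bar>l t \<bullet> v\<bar> \<le> a t * nrm v"
    and y: "\<And>t. t \<in> {1..T} \<Longrightarrow>
      approx_minimizer X (\<lambda>z. (\<Sum>s\<in>{1..<t}. l s) \<bullet> z + H z / \<beta> t) (\<epsilon> t) (y t)"
    and "p \<in> X"
  shows "(\<Sum>t=1..T. l t \<bullet> (y t - p)) \<le> H p / \<beta> (Suc T) + (\<Sum>t=1..T. 2 * \<epsilon> t + \<beta> t * (a t)\<^sup>2)"
proof -
  define F where "F t z = (\<Sum>s\<in>{1..<t}. l s) \<bullet> z + H z / \<beta> t" for t z
  define e where "e t = 2 * \<epsilon> t + \<beta> t * (a t)\<^sup>2" for t
  have "\<forall>z\<in>X. (\<Sum>t=1..k. l t \<bullet> y t - e t) \<le> F (Suc k) z" if "k \<le> T" for k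
    using that
  proof (induction k)
    case 0
    then show ?case using assms(3) \<beta>(1) by (simp add: F_def divide_nonneg_pos)
  next
    case (Suc k)
    then have t: "Suc k \<in> {1..T}" by simp
    have "(\<Sum>t=1..k. l t \<bullet> y t - e t) \<le> F (Suc k) (y (Suc k))"
      using Suc y[OF t] by (simp add: approx_minimizer_def)
    moreover have "F (Suc k) (y (Suc k)) + l (Suc k) \<bullet> y (Suc k) - e (Suc k) \<le> F (Suc (Suc k)) z"
      if "z \<in> X" for z
      using approx_leader_step[OF assms(1-3) \<beta>(1) \<beta>(2) l[OF t] y[OF t] that]
      by (simp add: F_def e_def sum.atLeastLessThan_Suc)
    ultimately show ?case by force
  qed
  from this[of T] assms(8) have "(\<Sum>t=1..T. l t \<bullet> y t - e t) \<le> F (Suc T) p" by simp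
  moreover have "F (Suc T) p = (\<Sum>t=1..T. l t \<bullet> p) + H p / \<beta> (Suc T)"
    by (simp add: F_def atLeastLessThanSuc_atLeastAtMost inner_sum_left)
  ultimately show ?thesis
    by (simp add: e_def inner_diff_right sum_subtractf)
qed

section \<open>Decentralized dual averaging with delays\<close>

definition feedback_pairs :: "(nat \<Rightarrow> nat) \<Rightarrow> nat set \<Rightarrow> (nat \<times> nat) set"
  where "feedback_pairs M A = {(j, s). s \<in> A \<and> 1 \<le> j \<and> j \<le> M s}"

lemma feedback_pairs_eq_image:
  "feedback_pairs M A = (\<lambda>(s, j). (j, s)) ` (SIGMA s:A. {1..M s})"
  by (auto simp: feedback_pairs_def image_iff)

lemma finite_feedback_pairs: "finite A \<Longrightarrow> finite (feedback_pairs M A)"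
  by (simp add: feedback_pairs_eq_image)

lemma sum_feedback_pairs:
  assumes "finite A"
  shows "(\<Sum>(j, s)\<in>feedback_pairs M A. u j s) = (\<Sum>s\<in>A. \<Sum>j=1..M s. u j s)"
proof -
  have "inj_on (\<lambda>(s, j). (j, s)) (SIGMA s:A. {1..M s})"
    by (auto simp: inj_on_def)
  then have "(\<Sum>(j, s)\<in>feedback_pairs M A. u j s) = (\<Sum>(s, j)\<in>(SIGMA s:A. {1..M s}). u j s)"
    unfolding feedback_pairs_eq_image by (subst sum.reindex) (simp_all add: comp_def split_beta)
  also have "\<dots> = (\<Sum>s\<in>A. \<Sum>j=1..M s. u j s)"
    using assms by (simp add: sum.Sigma)
  finally show ?thesis .
qed

lemma card_feedback_pairs:
  assumes "finite A"
  shows "card (feedback_pairs M A) = (\<Sum>s\<in>A. M s)"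
  using sum_feedback_pairs[OF assms, where u = "\<lambda>_ _. 1::nat"] by (simp add: split_def)

locale decentralized_dda =
  fixes X :: "'v::euclidean_space set" and nrm :: "'v \<Rightarrow> real" and h :: "'v \<Rightarrow> ereal"
    and T :: nat and M :: "nat \<Rightarrow> nat" and S :: "nat \<Rightarrow> nat \<Rightarrow> (nat \<times> nat) set"
    and x :: "nat \<Rightarrow> nat \<Rightarrow> 'v" and f :: "nat \<Rightarrow> nat \<Rightarrow> 'v \<Rightarrow> real" and g :: "nat \<Rightarrow> nat \<Rightarrow> 'v"
    and G r :: real and \<tau> :: nat and p :: 'v and jt :: "nat \<Rightarrow> nat"
  assumes convex_X: "convex X" and norm: "is_norm nrm" and regularizer: "regularizer X nrm h"
    and agents_pos: "\<And>t. t \<in> {1..T} \<Longrightarrow> 1 \<le> M t"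
    and feedback_earlier: "\<And>t i. t \<in> {1..T} \<Longrightarrow> i \<in> {1..M t} \<Longrightarrow>
      S i t \<subseteq> {(j, s). 1 \<le> s \<and> s \<le> t - 1 \<and> 1 \<le> j \<and> j \<le> M s}"
    and G_pos: "0 < G"
    and lipschitz: "\<And>t i. t \<in> {1..T} \<Longrightarrow> i \<in> {1..M t} \<Longrightarrow> lipschitz_wrt nrm G (f i t)"
    and subgradient: "\<And>t i. t \<in> {1..T} \<Longrightarrow> i \<in> {1..M t} \<Longrightarrow> g i t \<in> subdiff (f i t) (x i t)"
    and r_pos: "0 < r"
    and dda: "\<And>t i. t \<in> {1..T} \<Longrightarrow> i \<in> {1..M t} \<Longrightarrow> x i t \<in> X \<and>
      (\<forall>y\<in>X. (\<Sum>(j, s)\<in>S i t. g j s \<bullet> x i t) + real_of_ereal (h (x i t)) / stepsize r G \<tau> T M (S i t)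
        \<le> (\<Sum>(j, s)\<in>S i t. g j s \<bullet> y) + real_of_ereal (h y) / stepsize r G \<tau> T M (S i t))"
    and delay: "\<And>t i s j. t \<in> {1..T} \<Longrightarrow> i \<in> {1..M t} \<Longrightarrow> 1 \<le> s \<Longrightarrow> s + \<tau> + 1 \<le> t \<Longrightarrow>
      j \<in> {1..M s} \<Longrightarrow> (j, s) \<in> S i t"
    and comparator: "p \<in> X" "h p \<le> ereal (r\<^sup>2)"
    and reference_agents: "\<And>t. t \<in> {1..T} \<Longrightarrow> jt t \<in> {1..M t}"

text \<open>For T = 0 the quantity Mmax T M is the maximum of the empty set, hence unspecified.\<close>

locale decentralized_dda_nonempty = decentralized_dda X nrm h T M S x f g G r \<tau> p jt
  for X :: "'v::euclidean_space set" and nrm h T M S x f g G r \<tau> p jt +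
  assumes rounds_pos: "0 < T"
begin

text \<open>real_of_ereal sends \<open>\<infinity>\<close> to 0, but H is only compared at points of X, where h is finite.\<close>

abbreviation H :: "'v \<Rightarrow> real"
  where "H z \<equiv> real_of_ereal (h z)"

lemma H_nonneg: "0 \<le> H z"
  using regularizer by (rule regularizer_nonneg)

lemma H_strongly_convex: "midpoint_strongly_convex X nrm H"
  using regularizer by (rule regularizer_midpoint_strongly_convex)

lemma H_comparator: "H p \<le> r\<^sup>2"
  using comparator(2) H_nonneg[of p] regularizer
  by (cases "h p") (auto simp: regularizer_def)

lemma regret_eq_sum: "coll_regret T M f x jt p = (\<Sum>t=1..T. \<Sum>i=1..M t. f i t (x (jt t) t) - f i t p)"
  by (simp add: coll_regret_def sum_subtractf)

lemma agents_le_Mmax: "t \<in> {1..T} \<Longrightarrow> M t \<le> Mmax T M"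
  unfolding Mmax_def by simp

lemma Mmax_pos: "1 \<le> Mmax T M"
  using agents_pos[of 1] agents_le_Mmax[of 1] rounds_pos by simp

definition shift :: real
  where "shift = (real \<tau> + 1) * real (Mmax T M)"

definition scale :: real
  where "scale = (5 * real \<tau> + 3) * real (Mmax T M)"

definition eta :: "real \<Rightarrow> real"
  where "eta n = r / (G * sqrt (scale * (n + shift)))"

lemma shift_ge_1: "1 \<le> shift"
  using Mmax_pos mult_mono[of 1 "real \<tau> + 1" 1 "real (Mmax T M)"] by (simp add: shift_def)

lemma Mmax_le_shift: "real (Mmax T M) \<le> shift"
  unfolding shift_def using mult_right_mono[of 1 "real \<tau> + 1" "real (Mmax T M)"] by simp

lemma agents_le_shift: "t \<in> {1..T} \<Longrightarrow> real (M t) \<le> shift"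
  using Mmax_le_shift agents_le_Mmax by (meson of_nat_le_iff order_trans)

lemma shift_le_scale: "shift \<le> scale"
  using Mmax_pos by (simp add: shift_def scale_def)

lemma scale_le_5_shift: "scale \<le> 5 * shift"
  using Mmax_pos by (simp add: shift_def scale_def algebra_simps)

lemma stepsize_eq_eta: "stepsize r G \<tau> T M A = eta (real (card A))"
proof -
  have "(5 * real \<tau> + 3) * (real (card A) + (real \<tau> + 1) * real (Mmax T M)) * real (Mmax T M)
      = scale * (real (card A) + shift)"
    by (simp add: scale_def shift_def algebra_simps)
  then show ?thesis by (simp add: stepsize_def eta_def)
qed

lemma eta_eq: "0 \<le> n \<Longrightarrow> eta n = r / (G * sqrt scale) / sqrt (n + shift)"
  using shift_ge_1 shift_le_scale by (simp add: eta_def real_sqrt_mult)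

lemma eta_pos: "0 \<le> n \<Longrightarrow> 0 < eta n"
  using shift_ge_1 shift_le_scale r_pos G_pos by (simp add: eta_eq)

lemma eta_antimono: "0 \<le> a \<Longrightarrow> a \<le> b \<Longrightarrow> eta b \<le> eta a"
  using shift_ge_1 shift_le_scale r_pos G_pos
  by (simp add: eta_eq divide_left_mono)

lemma G_mult_eta: "0 \<le> n \<Longrightarrow> G * eta n = r / (sqrt scale * sqrt (n + shift))"
  using G_pos by (simp add: eta_eq)

lemma eta_diff_mult_le:
  assumes "0 \<le> \<sigma>" "\<sigma> \<le> n"
  shows "(eta \<sigma> - eta n) * \<sigma> \<le> (n - \<sigma>) * eta n"
proof -
  define \<kappa> where "\<kappa> = r / (G * sqrt scale)"
  define a where "a = 1 / sqrt (\<sigma> + shift)"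
  define b where "b = 1 / sqrt (n + shift)"
  have "0 < \<kappa>" using r_pos G_pos shift_ge_1 shift_le_scale by (simp add: \<kappa>_def)
  have eta: "eta \<sigma> = \<kappa> * a" "eta n = \<kappa> * b"
    using assms by (simp_all add: eta_eq \<kappa>_def a_def b_def)
  have "\<sigma> * (a - b) \<le> (n - \<sigma>) * b"
    using mult_inverse_sqrt_diff_le[OF assms, of shift] shift_ge_1 by (simp add: a_def b_def)
  then have "\<kappa> * (\<sigma> * (a - b)) \<le> \<kappa> * ((n - \<sigma>) * b)"
    using \<open>0 < \<kappa>\<close> by (rule mult_left_mono[OF _ less_imp_le])
  then show ?thesis
    unfolding eta by (simp add: algebra_simps)
qed

lemma card_mult_G_eta_le:
  assumes "0 \<le> \<sigma>" "\<sigma> \<le> scale"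
  shows "\<sigma> * (G * eta \<sigma>) \<le> r"
proof -
  have "\<sigma> * \<sigma> \<le> scale * (\<sigma> + shift)"
    using assms shift_ge_1 shift_le_scale by (intro mult_mono) auto
  then have "sqrt (\<sigma> * \<sigma>) \<le> sqrt (scale * (\<sigma> + shift))"
    by (rule real_sqrt_le_mono)
  then have "\<sigma> \<le> sqrt scale * sqrt (\<sigma> + shift)"
    using assms(1) by (simp add: real_sqrt_mult)
  moreover have "0 < sqrt scale * sqrt (\<sigma> + shift)"
    using assms(1) shift_ge_1 shift_le_scale by simp
  ultimately have "\<sigma> / (sqrt scale * sqrt (\<sigma> + shift)) \<le> 1"
    by (simp add: divide_le_eq)
  then have "r * (\<sigma> / (sqrt scale * sqrt (\<sigma> + shift))) \<le> r * 1"
    using r_pos by (intro mult_left_mono) auto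
  then show ?thesis
    using assms(1) by (simp add: G_mult_eta mult.commute)
qed

definition past :: "nat \<Rightarrow> (nat \<times> nat) set"
  where "past t = feedback_pairs M {1..<t}"

lemma finite_past: "finite (past t)"
  by (simp add: past_def finite_feedback_pairs)

lemma card_past: "card (past t) = (\<Sum>s\<in>{1..<t}. M s)"
  by (simp add: past_def card_feedback_pairs)

lemma card_past_le_Ntot: "t \<le> Suc T \<Longrightarrow> card (past t) \<le> Ntot T M"
  unfolding card_past Ntot_def by (rule sum_mono2) auto

lemma card_past_Suc: "card (past (Suc T)) = Ntot T M"
  by (simp add: card_past Ntot_def atLeastLessThanSuc_atLeastAtMost)

lemma card_past_mono: "card (past t) \<le> card (past (Suc t))"
  using finite_past by (intro card_mono) (auto simp: past_def feedback_pairs_def)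

lemma past_gradient_inner_le:
  assumes "t \<le> Suc T" "A \<subseteq> past t"
  shows "\<bar>(\<Sum>(j, s)\<in>A. g j s) \<bullet> v\<bar> \<le> real (card A) * G * nrm v"
proof (rule inner_sum_abs_le)
  show "finite A" using assms(2) finite_past by (rule finite_subset)
  fix w assume "w \<in> A"
  with assms obtain j s where "w = (j, s)" "s \<in> {1..T}" "j \<in> {1..M s}"
    by (auto simp: past_def feedback_pairs_def)
  then show "\<bar>(case w of (j, s) \<Rightarrow> g j s) \<bullet> v\<bar> \<le> G * nrm v"
    using subgradient_inner_le[OF norm lipschitz subgradient] by simp
qed

lemma feedback_subset_past: "t \<in> {1..T} \<Longrightarrow> i \<in> {1..M t} \<Longrightarrow> S i t \<subseteq> past t"
  using feedback_earlier by (fastforce simp: past_def feedback_pairs_def)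

lemma card_feedback_le_past: "t \<in> {1..T} \<Longrightarrow> i \<in> {1..M t} \<Longrightarrow> card (S i t) \<le> card (past t)"
  using feedback_subset_past finite_past by (rule card_mono[rotated])

lemma card_past_diff_feedback_le:
  assumes "t \<in> {1..T}" "i \<in> {1..M t}"
  shows "card (past t - S i t) \<le> \<tau> * Mmax T M"
proof -
  define D where "D = {s. 1 \<le> s \<and> s < t \<and> t \<le> s + \<tau>}"
  have "D \<subseteq> {t - \<tau>..<t}" by (auto simp: D_def)
  then have D: "finite D" "card D \<le> \<tau>"
    using finite_subset card_mono[of "{t - \<tau>..<t}" D] by auto
  have "past t - S i t \<subseteq> feedback_pairs M D"
    using delay[OF assms] by (fastforce simp: past_def feedback_pairs_def D_def)
  then have "card (past t - S i t) \<le> (\<Sum>s\<in>D. M s)"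
    using card_mono[OF finite_feedback_pairs[OF D(1)]] card_feedback_pairs[OF D(1)] by metis
  also have "\<dots> \<le> (\<Sum>s\<in>D. Mmax T M)"
    using assms by (intro sum_mono agents_le_Mmax) (auto simp: D_def)
  also have "\<dots> \<le> \<tau> * Mmax T M"
    using D(2) by simp
  finally show ?thesis .
qed

definition feedback_gradient :: "nat \<Rightarrow> nat \<Rightarrow> 'v"
  where "feedback_gradient i t = (\<Sum>(j, s)\<in>S i t. g j s)"

lemma iterate_minimizer:
  assumes "t \<in> {1..T}" "i \<in> {1..M t}"
  shows "approx_minimizer X (\<lambda>z. feedback_gradient i t \<bullet> z + H z / eta (card (S i t))) 0 (x i t)"
  using dda[OF assms]
  by (simp add: approx_minimizer_def feedback_gradient_def stepsize_eq_eta inner_sum_left split_def)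

lemma scaled_iterate_minimizer:
  assumes "t \<in> {1..T}" "i \<in> {1..M t}"
  shows "approx_minimizer X (\<lambda>z. (eta (card (S i t)) *\<^sub>R feedback_gradient i t) \<bullet> z + H z) 0 (x i t)"
  using approx_minimizer_scaleR[OF eta_pos iterate_minimizer[OF assms]] by simp

lemma feedback_gradient_inner_le:
  assumes "t \<in> {1..T}" "i \<in> {1..M t}"
  shows "\<bar>feedback_gradient i t \<bullet> v\<bar> \<le> real (card (S i t)) * G * nrm v"
  unfolding feedback_gradient_def
  using assms(1) feedback_subset_past[OF assms] by (intro past_gradient_inner_le) auto

lemma iterate_close_to_comparator:
  assumes "real (Ntot T M) < shift" "t \<in> {1..T}" "i \<in> {1..M t}"
  shows "nrm (x i t - p) \<le> 6 * r"
proof -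
  define \<sigma> where "\<sigma> = real (card (S i t))"
  define \<theta> where "\<theta> = eta \<sigma> *\<^sub>R feedback_gradient i t"
  let ?d = "nrm (x i t - p)"
  have "\<sigma> \<le> scale"
    using card_feedback_le_past[OF assms(2,3)] card_past_le_Ntot[of t] assms shift_le_scale
    by (simp add: \<sigma>_def)
  have "\<theta> \<bullet> x i t + H (x i t) / 1 - 2 * 0 + (nrm (p - x i t))\<^sup>2 / (4 * 1) \<le> \<theta> \<bullet> p + H p / 1"
    by (rule approx_minimizer_quadratic_growth[OF convex_X H_strongly_convex _ _ comparator(1)])
      (use scaled_iterate_minimizer[OF assms(2,3)] in \<open>simp_all add: \<theta>_def \<sigma>_def\<close>)
  moreover have "\<bar>\<theta> \<bullet> (p - x i t)\<bar> \<le> r * ?d"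
  proof -
    have "\<bar>\<theta> \<bullet> (p - x i t)\<bar> \<le> eta \<sigma> * (\<sigma> * G * ?d)"
      using feedback_gradient_inner_le[OF assms(2,3), of "p - x i t"] eta_pos[of \<sigma>]
        is_norm_minus_commute[OF norm, of p "x i t"]
      by (simp add: \<theta>_def \<sigma>_def abs_mult mult_left_mono)
    also have "\<dots> = (\<sigma> * (G * eta \<sigma>)) * ?d" by simp
    also have "\<dots> \<le> r * ?d"
      using card_mult_G_eta_le[OF _ \<open>\<sigma> \<le> scale\<close>] is_norm_nonneg[OF norm]
      by (intro mult_right_mono) (auto simp: \<sigma>_def)
    finally show ?thesis .
  qed
  ultimately have "?d\<^sup>2 \<le> 2 * (2 * r) * ?d + 4 * r\<^sup>2"
    using H_nonneg[of "x i t"] H_comparator is_norm_minus_commute[OF norm, of p "x i t"]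
    by (simp add: inner_diff_right)
  then have "?d \<le> 2 * (2 * r) + 2 * sqrt (r\<^sup>2)"
    using r_pos by (intro le_sqrt_of_sq_le) auto
  then show ?thesis using r_pos by simp
qed

lemma regret_bound_short_horizon:
  assumes "real (Ntot T M) < shift"
  shows "coll_regret T M f x jt p \<le> 6 * r * G * sqrt (shift * real (Ntot T M))"
proof -
  have "f i t (x (jt t) t) - f i t p \<le> 6 * r * G" if "t \<in> {1..T}" "i \<in> {1..M t}" for t i
  proof -
    have "f i t (x (jt t) t) - f i t p \<le> G * nrm (x (jt t) t - p)"
      using lipschitz[OF that] by (simp add: lipschitz_wrt_def abs_le_iff)
    also have "\<dots> \<le> G * (6 * r)"
      using iterate_close_to_comparator[OF assms that(1) reference_agents[OF that(1)]] G_pos by simp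
    finally show ?thesis by (simp add: mult_ac)
  qed
  then have "coll_regret T M f x jt p \<le> (\<Sum>t=1..T. \<Sum>i=1..M t. 6 * r * G)"
    unfolding regret_eq_sum by (intro sum_mono) auto
  also have "\<dots> = 6 * r * G * real (Ntot T M)"
    by (simp add: Ntot_def sum_distrib_left mult.commute)
  also have "\<dots> \<le> 6 * r * G * sqrt (shift * real (Ntot T M))"
  proof -
    have "real (Ntot T M) * real (Ntot T M) \<le> shift * real (Ntot T M)"
      using assms by (intro mult_right_mono) auto
    then have "real (Ntot T M) \<le> sqrt (shift * real (Ntot T M))"
      using real_sqrt_le_mono by fastforce
    then show ?thesis using r_pos G_pos by simp
  qed
  finally show ?thesis .
qed

definition round_gradient :: "nat \<Rightarrow> 'v"
  where "round_gradient t = (\<Sum>i=1..M t. g i t)"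

definition past_gradient :: "nat \<Rightarrow> 'v"
  where "past_gradient t = (\<Sum>(j, s)\<in>past t. g j s)"

definition leader_rate :: "nat \<Rightarrow> real"
  where "leader_rate t = eta (real (card (past t)))"

definition leader :: "nat \<Rightarrow> 'v"
  where "leader t = (SOME y. approx_minimizer X
    (\<lambda>z. past_gradient t \<bullet> z + H z / leader_rate t) (G\<^sup>2 * leader_rate t) y)"

lemma past_gradient_eq_sum: "past_gradient t = (\<Sum>s\<in>{1..<t}. round_gradient s)"
  by (simp add: past_gradient_def past_def round_gradient_def sum_feedback_pairs)

lemma leader_rate_pos: "0 < leader_rate t"
  by (simp add: leader_rate_def eta_pos)

lemma leader_rate_antimono: "leader_rate (Suc t) \<le> leader_rate t"
  unfolding leader_rate_def using card_past_mono by (intro eta_antimono) auto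

lemma leader_minimizer:
  assumes "t \<le> Suc T"
  shows "approx_minimizer X (\<lambda>z. past_gradient t \<bullet> z + H z / leader_rate t) (G\<^sup>2 * leader_rate t) (leader t)"
proof -
  have "\<exists>y. approx_minimizer X (\<lambda>z. past_gradient t \<bullet> z + H z / leader_rate t) (G\<^sup>2 * leader_rate t) y"
  proof (rule regularized_linear_approx_minimizer_exists
      [OF H_strongly_convex H_nonneg leader_rate_pos _ _ mult_pos_pos])
    show "X \<noteq> {}" using comparator(1) by blast
    show "\<bar>past_gradient t \<bullet> v\<bar> \<le> real (card (past t)) * G * nrm v" for v
      unfolding past_gradient_def using assms by (rule past_gradient_inner_le) simp
  qed (use G_pos leader_rate_pos in auto)
  then show ?thesis
    unfolding leader_def by (rule someI_ex)
qed

lemma round_gradient_inner_le: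
  assumes "t \<in> {1..T}"
  shows "\<bar>round_gradient t \<bullet> v\<bar> \<le> real (M t) * G * nrm v"
  unfolding round_gradient_def
  using inner_sum_abs_le[of "{1..M t}" "\<lambda>i. g i t" v G "nrm v"]
    subgradient_inner_le[OF norm lipschitz[OF assms] subgradient[OF assms]] by simp

lemma leader_regret_le:
  "(\<Sum>t=1..T. round_gradient t \<bullet> (leader t - p))
    \<le> r\<^sup>2 / leader_rate (Suc T)
      + (\<Sum>t=1..T. 2 * (G\<^sup>2 * leader_rate t) + leader_rate t * (real (M t) * G)\<^sup>2)"
proof -
  have "(\<Sum>t=1..T. round_gradient t \<bullet> (leader t - p))
      \<le> H p / leader_rate (Suc T)
        + (\<Sum>t=1..T. 2 * (G\<^sup>2 * leader_rate t) + leader_rate t * (real (M t) * G)\<^sup>2)"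
  proof (rule approx_leader_regret_bound[where \<beta> = leader_rate and l = round_gradient and a = "\<lambda>t. real (M t) * G",
        OF convex_X H_strongly_convex H_nonneg leader_rate_pos leader_rate_antimono
        round_gradient_inner_le _ comparator(1)])
    show "approx_minimizer X (\<lambda>z. (\<Sum>s\<in>{1..<t}. round_gradient s) \<bullet> z + H z / leader_rate t)
        (G\<^sup>2 * leader_rate t) (leader t)" if "t \<in> {1..T}" for t
      using leader_minimizer[of t] that by (simp add: past_gradient_eq_sum)
  qed
  also have "H p / leader_rate (Suc T) \<le> r\<^sup>2 / leader_rate (Suc T)"
    using H_comparator leader_rate_pos by (rule divide_right_mono[OF _ less_imp_le])
  finally show ?thesis by simp
qed

lemma card_past_minus_feedback_le:
  assumes "t \<in> {1..T}" "i \<in> {1..M t}"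
  shows "real (card (past t)) - real (card (S i t)) \<le> real \<tau> * real (Mmax T M)"
proof -
  have "card (past t) - card (S i t) \<le> \<tau> * Mmax T M"
    using card_past_diff_feedback_le[OF assms]
      card_Diff_subset[OF finite_subset[OF feedback_subset_past[OF assms] finite_past]
        feedback_subset_past[OF assms]]
    by simp
  then show ?thesis
    using card_feedback_le_past[OF assms] by (simp add: of_nat_diff flip: of_nat_mult)
qed

lemma missing_gradient_inner_le:
  assumes "t \<in> {1..T}" "i \<in> {1..M t}"
  shows "\<bar>(\<Sum>(j, s)\<in>past t - S i t. g j s) \<bullet> v\<bar> \<le> real \<tau> * real (Mmax T M) * G * nrm v"
proof -
  have "\<bar>(\<Sum>(j, s)\<in>past t - S i t. g j s) \<bullet> v\<bar> \<le> real (card (past t - S i t)) * G * nrm v"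
    by (rule past_gradient_inner_le[of t]) (use assms(1) in auto)
  also have "\<dots> \<le> real \<tau> * real (Mmax T M) * G * nrm v"
    using card_past_diff_feedback_le[OF assms] G_pos is_norm_nonneg[OF norm, of v]
    by (intro mult_right_mono) (auto simp flip: of_nat_mult)
  finally show ?thesis .
qed

lemma leader_rate_le_eta: "t \<in> {1..T} \<Longrightarrow> i \<in> {1..M t} \<Longrightarrow> leader_rate t \<le> eta (card (S i t))"
  unfolding leader_rate_def using card_feedback_le_past by (intro eta_antimono) auto

lemma rate_gap_mult_card_le:
  assumes "t \<in> {1..T}" "i \<in> {1..M t}"
  shows "(eta (card (S i t)) - leader_rate t) * card (S i t) \<le> real \<tau> * real (Mmax T M) * leader_rate t"
proof -
  have "(eta (card (S i t)) - leader_rate t) * card (S i t)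
      \<le> (real (card (past t)) - card (S i t)) * leader_rate t"
    using eta_diff_mult_le[of "real (card (S i t))" "real (card (past t))"] card_feedback_le_past[OF assms]
    by (simp add: leader_rate_def)
  also have "\<dots> \<le> real \<tau> * real (Mmax T M) * leader_rate t"
    using card_past_minus_feedback_le[OF assms] leader_rate_pos[of t] by (intro mult_right_mono) auto
  finally show ?thesis .
qed

lemma scaled_gradient_gap_inner_le:
  assumes "t \<in> {1..T}" "i \<in> {1..M t}"
  shows "\<bar>(eta (card (S i t)) *\<^sub>R feedback_gradient i t - leader_rate t *\<^sub>R past_gradient t) \<bullet> v\<bar>
    \<le> 2 * real \<tau> * real (Mmax T M) * G * leader_rate t * nrm v"
proof -
  define \<sigma> where "\<sigma> = real (card (S i t))"
  define \<beta> where "\<beta> = leader_rate t"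
  define \<Delta> where "\<Delta> = (\<Sum>(j, s)\<in>past t - S i t. g j s)"
  define B where "B = real \<tau> * real (Mmax T M)"
  have "\<bar>(eta \<sigma> - \<beta>) * (feedback_gradient i t \<bullet> v)\<bar> \<le> (eta \<sigma> - \<beta>) * (\<sigma> * G * nrm v)"
    using leader_rate_le_eta[OF assms] feedback_gradient_inner_le[OF assms, of v]
    by (simp add: abs_mult \<sigma>_def \<beta>_def mult_left_mono)
  also have "\<dots> = ((eta \<sigma> - \<beta>) * \<sigma>) * (G * nrm v)" by simp
  also have "\<dots> \<le> B * \<beta> * (G * nrm v)"
    using rate_gap_mult_card_le[OF assms] G_pos is_norm_nonneg[OF norm, of v]
    by (intro mult_right_mono) (auto simp: \<sigma>_def \<beta>_def B_def)
  finally have stepsize_part: "\<bar>(eta \<sigma> - \<beta>) * (feedback_gradient i t \<bullet> v)\<bar> \<le> B * \<beta> * (G * nrm v)" .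
  have delay_part: "\<bar>\<beta> * (\<Delta> \<bullet> v)\<bar> \<le> \<beta> * (B * G * nrm v)"
    using missing_gradient_inner_le[OF assms, of v] leader_rate_pos[of t]
    by (simp add: abs_mult \<beta>_def \<Delta>_def B_def mult_left_mono)
  have "past_gradient t = \<Delta> + feedback_gradient i t"
    unfolding past_gradient_def \<Delta>_def feedback_gradient_def
    by (rule sum.subset_diff[OF feedback_subset_past[OF assms] finite_past])
  then have "\<bar>(eta \<sigma> *\<^sub>R feedback_gradient i t - \<beta> *\<^sub>R past_gradient t) \<bullet> v\<bar>
      = \<bar>(eta \<sigma> - \<beta>) * (feedback_gradient i t \<bullet> v) - \<beta> * (\<Delta> \<bullet> v)\<bar>"
    by (simp add: inner_diff_left inner_add_left algebra_simps)
  also have "\<dots> \<le> \<bar>(eta \<sigma> - \<beta>) * (feedback_gradient i t \<bullet> v)\<bar> + \<bar>\<beta> * (\<Delta> \<bullet> v)\<bar>"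
    by (rule abs_triangle_ineq4)
  also have "\<dots> \<le> B * \<beta> * (G * nrm v) + \<beta> * (B * G * nrm v)"
    using stepsize_part delay_part by (rule add_mono)
  also have "\<dots> = 2 * real \<tau> * real (Mmax T M) * G * \<beta> * nrm v"
    by (simp add: B_def algebra_simps)
  finally show ?thesis
    by (simp add: \<sigma>_def \<beta>_def)
qed

definition leader_radius :: "nat \<Rightarrow> real"
  where "leader_radius t = (4 * real \<tau> * real (Mmax T M) + 2) * G * leader_rate t"

lemma iterate_close_to_leader:
  assumes "t \<in> {1..T}" "i \<in> {1..M t}"
  shows "nrm (x i t - leader t) \<le> leader_radius t"
proof -
  have leader: "approx_minimizer X (\<lambda>z. (leader_rate t *\<^sub>R past_gradient t) \<bullet> z + H z)
      (leader_rate t * (G\<^sup>2 * leader_rate t)) (leader t)"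
    by (rule approx_minimizer_scaleR[OF leader_rate_pos leader_minimizer]) (use assms in simp)
  have "nrm (x i t - leader t)
      \<le> 2 * (2 * real \<tau> * real (Mmax T M) * G * leader_rate t)
        + 2 * sqrt (leader_rate t * (G\<^sup>2 * leader_rate t))"
    by (rule approx_minimizers_close[OF norm convex_X H_strongly_convex
          scaled_iterate_minimizer[OF assms] leader scaled_gradient_gap_inner_le[OF assms]])
      (use G_pos leader_rate_pos[of t] in auto)
  also have "sqrt (leader_rate t * (G\<^sup>2 * leader_rate t)) = G * leader_rate t"
    using G_pos leader_rate_pos[of t] by (simp add: real_sqrt_mult power2_eq_square)
  finally show ?thesis
    by (simp add: leader_radius_def algebra_simps)
qed

lemma loss_gap_le:
  assumes "t \<in> {1..T}" "i \<in> {1..M t}"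
  shows "f i t (x (jt t) t) - f i t p \<le> g i t \<bullet> (leader t - p) + 3 * G * leader_radius t"
proof -
  have "f i t (x (jt t) t) - f i t (x i t) \<le> G * nrm (x (jt t) t - x i t)"
    using lipschitz[OF assms] by (simp add: lipschitz_wrt_def abs_le_iff)
  also have "\<dots> \<le> G * (2 * leader_radius t)"
    using is_norm_triangle_diff[OF norm, of "x (jt t) t" "x i t" "leader t"] G_pos
      iterate_close_to_leader[OF assms(1) reference_agents[OF assms(1)]] iterate_close_to_leader[OF assms]
    by (intro mult_left_mono) auto
  finally have "f i t (x (jt t) t) - f i t (x i t) \<le> 2 * G * leader_radius t" by simp
  moreover have "f i t (x i t) + g i t \<bullet> (p - x i t) \<le> f i t p"
    using subgradient[OF assms] unfolding subdiff_def by blast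
  then have "f i t (x i t) - f i t p \<le> g i t \<bullet> (x i t - p)"
    by (simp add: inner_diff_right)
  moreover have "g i t \<bullet> (x i t - leader t) \<le> G * nrm (x i t - leader t)"
    using subgradient_inner_le[OF norm lipschitz[OF assms] subgradient[OF assms]] by (rule abs_le_D1)
  moreover have "G * nrm (x i t - leader t) \<le> G * leader_radius t"
    using iterate_close_to_leader[OF assms] G_pos by (intro mult_left_mono) auto
  moreover have "g i t \<bullet> (x i t - p) = g i t \<bullet> (x i t - leader t) + g i t \<bullet> (leader t - p)"
    by (simp add: inner_diff_right)
  ultimately show ?thesis by linarith
qed

lemma regret_le_leader_regret:
  "coll_regret T M f x jt p
    \<le> (\<Sum>t=1..T. round_gradient t \<bullet> (leader t - p)) + (\<Sum>t=1..T. real (M t) * (3 * G * leader_radius t))"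
proof -
  have "coll_regret T M f x jt p \<le> (\<Sum>t=1..T. \<Sum>i=1..M t. g i t \<bullet> (leader t - p) + 3 * G * leader_radius t)"
    unfolding regret_eq_sum by (intro sum_mono loss_gap_le) auto
  also have "\<dots> = (\<Sum>t=1..T. round_gradient t \<bullet> (leader t - p)) + (\<Sum>t=1..T. real (M t) * (3 * G * leader_radius t))"
    by (simp add: sum.distrib round_gradient_def inner_sum_left)
  finally show ?thesis .
qed

lemma round_cost_le:
  assumes "t \<in> {1..T}"
  shows "2 * (G\<^sup>2 * leader_rate t) + leader_rate t * (real (M t) * G)\<^sup>2 + real (M t) * (3 * G * leader_radius t)
    \<le> 21 * shift * G * (G * leader_rate t * real (M t))"
proof -
  define m where "m = real (M t)"
  define K where "K = real (Mmax T M)"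
  define u where "u = G * (G * leader_rate t)"
  have "1 \<le> m" "m \<le> K" "1 \<le> K"
    using agents_pos[OF assms] agents_le_Mmax[OF assms] Mmax_pos by (simp_all add: m_def K_def)
  then have "m * m \<le> K * m" "1 \<le> K * m" "m \<le> K * m" "0 \<le> real \<tau> * (K * m)"
    using mult_mono[of 1 K 1 m] by (simp_all add: mult_right_mono)
  then have "2 + m * m + 3 * m * (4 * real \<tau> * K + 2) \<le> 21 * (real \<tau> * (K * m)) + 21 * (K * m)"
    by (simp add: algebra_simps)
  also have "\<dots> = 21 * shift * m"
    by (simp add: shift_def K_def algebra_simps)
  finally have "2 + m * m + 3 * m * (4 * real \<tau> * K + 2) \<le> 21 * shift * m" .
  have "2 * (G\<^sup>2 * leader_rate t) + leader_rate t * (real (M t) * G)\<^sup>2 + real (M t) * (3 * G * leader_radius t)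
      = u * (2 + m * m + 3 * m * (4 * real \<tau> * K + 2))"
    by (simp add: u_def m_def K_def leader_radius_def power2_eq_square algebra_simps)
  also have "\<dots> \<le> u * (21 * shift * m)"
    using \<open>2 + m * m + 3 * m * (4 * real \<tau> * K + 2) \<le> 21 * shift * m\<close> G_pos leader_rate_pos[of t]
    by (intro mult_left_mono) (auto simp: u_def)
  also have "\<dots> = 21 * shift * G * (G * leader_rate t * real (M t))"
    by (simp add: u_def m_def mult_ac)
  finally show ?thesis .
qed

lemma sum_leader_rate_le:
  "shift * (\<Sum>t=1..T. G * leader_rate t * real (M t)) \<le> 2 * r * sqrt (shift * real (Ntot T M))"
proof -
  have rate: "G * leader_rate t = r / sqrt scale / sqrt ((\<Sum>s\<in>{1..<t}. real (M s)) + shift)" for t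
    using G_mult_eta[OF of_nat_0_le_iff[of "card (past t)"]] by (simp add: leader_rate_def card_past)
  have "(\<Sum>t=1..T. G * leader_rate t * real (M t))
      = r / sqrt scale * (\<Sum>t=1..T. real (M t) / sqrt ((\<Sum>s\<in>{1..<t}. real (M s)) + shift))"
    by (simp add: rate sum_distrib_left)
  also have "\<dots> \<le> r / sqrt scale * (2 * sqrt (real (Ntot T M)))"
  proof (rule mult_left_mono)
    show "(\<Sum>t=1..T. real (M t) / sqrt ((\<Sum>s\<in>{1..<t}. real (M s)) + shift))
        \<le> 2 * sqrt (real (Ntot T M))"
      unfolding Ntot_def of_nat_sum using agents_le_shift by (intro sum_div_sqrt_partial_sums_le) simp
  qed (use r_pos shift_ge_1 shift_le_scale in simp)
  finally have "shift * (\<Sum>t=1..T. G * leader_rate t * real (M t))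
      \<le> shift * (r / sqrt scale * (2 * sqrt (real (Ntot T M))))"
    using shift_ge_1 by (intro mult_left_mono) auto
  also have "\<dots> = shift / sqrt scale * (2 * r * sqrt (real (Ntot T M)))"
    by simp
  also have "\<dots> \<le> sqrt shift * (2 * r * sqrt (real (Ntot T M)))"
  proof (rule mult_right_mono)
    have "shift = sqrt shift * sqrt shift" using shift_ge_1 by simp
    also have "\<dots> \<le> sqrt shift * sqrt scale"
      using shift_le_scale shift_ge_1 by (intro mult_left_mono) auto
    finally show "shift / sqrt scale \<le> sqrt shift"
      using shift_ge_1 shift_le_scale by (simp add: divide_le_eq)
  qed (use r_pos in simp)
  also have "\<dots> = 2 * r * sqrt (shift * real (Ntot T M))"
    by (simp add: real_sqrt_mult)
  finally show ?thesis .
qed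

lemma initial_term_le:
  assumes "shift \<le> real (Ntot T M)"
  shows "r\<^sup>2 / leader_rate (Suc T) \<le> 4 * r * G * sqrt (shift * real (Ntot T M))"
proof -
  have "scale * (real (Ntot T M) + shift) \<le> (5 * shift) * (2 * real (Ntot T M))"
    using scale_le_5_shift assms shift_ge_1 shift_le_scale by (intro mult_mono) auto
  also have "\<dots> \<le> 16 * (shift * real (Ntot T M))"
    using assms shift_ge_1 by simp
  finally have "sqrt (scale * (real (Ntot T M) + shift)) \<le> sqrt 16 * sqrt (shift * real (Ntot T M))"
    unfolding real_sqrt_mult[symmetric] by (rule real_sqrt_le_mono)
  then have "sqrt (scale * (real (Ntot T M) + shift)) \<le> 4 * sqrt (shift * real (Ntot T M))"
    by simp
  then have "r * G * sqrt (scale * (real (Ntot T M) + shift)) \<le> r * G * (4 * sqrt (shift * real (Ntot T M)))"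
    using r_pos G_pos by (intro mult_left_mono) auto
  moreover have "r\<^sup>2 / leader_rate (Suc T) = r * G * sqrt (scale * (real (Ntot T M) + shift))"
    using r_pos G_pos by (simp add: leader_rate_def card_past_Suc eta_def power2_eq_square)
  ultimately show ?thesis by (simp add: mult_ac)
qed

lemma regret_bound_long_horizon:
  assumes "shift \<le> real (Ntot T M)"
  shows "coll_regret T M f x jt p \<le> 46 * r * G * sqrt (shift * real (Ntot T M))"
proof -
  define rate_cost where "rate_cost t = 2 * (G\<^sup>2 * leader_rate t) + leader_rate t * (real (M t) * G)\<^sup>2" for t
  define drift_cost where "drift_cost t = real (M t) * (3 * G * leader_radius t)" for t
  have "(\<Sum>t=1..T. rate_cost t) + (\<Sum>t=1..T. drift_cost t) = (\<Sum>t=1..T. rate_cost t + drift_cost t)"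
    by (simp add: sum.distrib)
  also have "\<dots> \<le> (\<Sum>t=1..T. 21 * shift * G * (G * leader_rate t * real (M t)))"
    unfolding rate_cost_def drift_cost_def by (intro sum_mono round_cost_le)
  also have "\<dots> = 21 * G * (shift * (\<Sum>t=1..T. G * leader_rate t * real (M t)))"
    by (simp add: sum_distrib_left mult_ac)
  also have "\<dots> \<le> 21 * G * (2 * r * sqrt (shift * real (Ntot T M)))"
    using sum_leader_rate_le G_pos by (intro mult_left_mono) auto
  finally have "(\<Sum>t=1..T. rate_cost t) + (\<Sum>t=1..T. drift_cost t) \<le> 42 * r * G * sqrt (shift * real (Ntot T M))"
    by (simp add: mult_ac)
  then show ?thesis
    using regret_le_leader_regret leader_regret_le initial_term_le[OF assms]
    unfolding rate_cost_def drift_cost_def by linarith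
qed

lemma regret_bound:
  "coll_regret T M f x jt p \<le> 46 * r * G * sqrt ((real \<tau> + 1) * real (Ntot T M) * real (Mmax T M))"
proof -
  have short_constant: "6 * r * G * sqrt (shift * real (Ntot T M)) \<le> 46 * r * G * sqrt (shift * real (Ntot T M))"
    using r_pos G_pos shift_ge_1 by (intro mult_right_mono) auto
  consider (short) "real (Ntot T M) < shift" | (long) "shift \<le> real (Ntot T M)"
    by linarith
  then have "coll_regret T M f x jt p \<le> 46 * r * G * sqrt (shift * real (Ntot T M))"
  proof cases
    case short
    show ?thesis
      using regret_bound_short_horizon[OF short] short_constant by (rule order_trans)
  next
    case long
    then show ?thesis by (rule regret_bound_long_horizon)
  qed
  then show ?thesis
    by (simp add: shift_def mult_ac)
qed

end

lemma (in decentralized_dda) collective_regret_bound: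
  "coll_regret T M f x jt p \<le> 46 * r * G * sqrt ((real \<tau> + 1) * real (Ntot T M) * real (Mmax T M))"
proof (cases "T = 0")
  case True
  then show ?thesis by (simp add: coll_regret_def Ntot_def)
next
  case False
  then interpret decentralized_dda_nonempty X nrm h T M S x f g G r \<tau> p jt
    by unfold_locales simp
  show ?thesis by (rule regret_bound)
qed

theorem theorem4:
  "\<exists>C::real. \<forall>(X::'v::euclidean_space set) nrm h T M S x f g G r \<tau> p jt.
     ( closed X \<and> convex X \<and> is_norm nrm \<and> regularizer X nrm h
       \<and> (\<forall>t\<in>{1..T}. 1 \<le> M t)
       \<comment> \<open>feedback sets consist of earlier (agent,time) indices\<close>
       \<and> (\<forall>t\<in>{1..T}. \<forall>i\<in>{1..M t}.
            S i t \<subseteq> {(j, s). 1 \<le> s \<and> s \<le> t - 1 \<and> 1 \<le> j \<and> j \<le> M s})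
       \<comment> \<open>convex G-Lipschitz losses and shared subgradients\<close>
       \<and> 0 < G
       \<and> (\<forall>t\<in>{1..T}. \<forall>i\<in>{1..M t}. convex_on UNIV (f i t) \<and> lipschitz_wrt nrm G (f i t)
                                  \<and> g i t \<in> subdiff (f i t) (x i t))
       \<comment> \<open>D-DDA with the prescribed stepsizes\<close>
       \<and> 0 < r
       \<and> (\<forall>t\<in>{1..T}. \<forall>i\<in>{1..M t}. x i t \<in> X \<and>
            (\<forall>y\<in>X. (\<Sum>(j, s)\<in>S i t. g j s \<bullet> x i t)
                       + real_of_ereal (h (x i t)) / stepsize r G \<tau> T M (S i t)
                    \<le> (\<Sum>(j, s)\<in>S i t. g j s \<bullet> y)
                       + real_of_ereal (h y) / stepsize r G \<tau> T M (S i t)))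
       \<comment> \<open>feedback sets strictly grow along the information flow\<close>
       \<and> (\<forall>t\<in>{1..T}. \<forall>i\<in>{1..M t}. \<forall>(j, s)\<in>S i t. card (S j s) < card (S i t))
       \<comment> \<open>maximum delay bounded by tau\<close>
       \<and> (\<forall>t\<in>{1..T}. \<forall>i\<in>{1..M t}. \<forall>s. 1 \<le> s \<and> s + \<tau> + 1 \<le> t \<longrightarrow>
            (\<forall>j\<in>{1..M s}. (j, s) \<in> S i t))
       \<comment> \<open>comparator and reference agents\<close>
       \<and> p \<in> X \<and> h p \<le> ereal (r\<^sup>2)
       \<and> (\<forall>t\<in>{1..T}. jt t \<in> {1..M t}) )
     \<longrightarrow> coll_regret T M f x jt p
           \<le> C * r * G * sqrt ((real \<tau> + 1) * real (Ntot T M) * real (Mmax T M))"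
  apply (intro exI[of _ 46] allI impI)
  subgoal for X nrm h T M S x f g G r \<tau> p jt
    by (elim conjE, intro decentralized_dda.collective_regret_bound[of X nrm h T M S x f g G r \<tau> p jt]
        decentralized_dda.intro) blast+
  done

end
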